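(* There is a constant $c$ such that for every basic Boolean formula $\phi$ whose variables are among $v_1,\dots,v_n$ there exists an instruction sequence $X\in\mathrm{IS}^{na}_{br}$ in which the basic instruction $\mathrm{out}.\mathrm{set}{:}F$ does not occur (in any plain, positive test or negative test instruction) such that $X$ computes the $n$-ary Boolean function induced by $\phi$ and $|X|\le c\cdot(\mathrm{size}(\phi)+1)$.
   Context: $\mathbb B=\{T,F\}$. A basic Boolean formula is a propositional formula built from variables $v_1,v_2,\dots$ using only the connectives $\neg,\vee,\wedge$; its size is the number of occurrences of variables and connectives. The $n$-ary Boolean function induced by $\phi$ (variables among $v_1,\dots,v_n$) maps $(b_1,\dots,b_n)$ to $T$ iff $\phi$ is true under $v_j\mapsto b_j$. A primitive instruction is one of: a plain basic instruction $a$, a positive test instruction $+a$, a negative test instruction $-a$ (for a basic instruction $a$), a forward jump instruction $\#l$ ($l\in\mathbb N$), or the termination instruction $!$. An instruction sequence is a finite nonempty sequence $X=u_1;\dots;u_k$ of primitive instructions; its length is $|X|=k$. Basic instructions have the form $f.m$ where the focus $f$ is one of $\mathrm{in}{:}i$, $\mathrm{aux}{:}i$ ($i\ge 1$) or $\mathrm{out}$, each naming a Boolean register, and the method $m$ is one of $\mathrm{set}{:}T$, $\mathrm{set}{:}F$, $\mathrm{get}$. Executing $f.\mathrm{set}{:}b$ sets register $f$ to $b$ and yields reply $b$; executing $f.\mathrm{get}$ leaves the register unchanged and yields its content as reply. Execution of $X=u_1;\dots;u_k$: a counter starts at $1$. If the counter exceeds $k$, execution deadlocks. At position $i$: if $u_i=!$,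 execution terminates; if $u_i=\#l$, execution deadlocks if $l=0$ and otherwise the counter becomes $i+l$; if $u_i$ is $a$, $+a$ or $-a$, the basic instruction $a$ is executed yielding reply $r$, and the counter becomes $i+1$ for $u_i=a$; for $u_i=+a$ it becomes $i+1$ if $r=T$ and $i+2$ if $r=F$; for $u_i=-a$ it becomes $i+1$ if $r=F$ and $i+2$ if $r=T$. $\mathrm{IS}_{br}$ is the set of instruction sequences in which every basic instruction occurring belongs to $\{f.\mathrm{get}: f=\mathrm{in}{:}i \text{ or } f=\mathrm{aux}{:}i\}\cup\{f.\mathrm{set}{:}b: f=\mathrm{aux}{:}i \text{ or } f=\mathrm{out},\ b\in\mathbb B\}$. $\mathrm{IS}^{na}_{br}\subseteq \mathrm{IS}_{br}$ is the set of those in which every basic instruction belongs to $\{\mathrm{in}{:}i.\mathrm{get}: i\ge1\}\cup\{\mathrm{out}.\mathrm{set}{:}T,\mathrm{out}.\mathrm{set}{:}F\}$. $X\in\mathrm{IS}_{br}$ computes $f:\mathbb B^n\to\mathbb B$ if for every $(b_1,\dots,b_n)\in\mathbb B^n$: when $X$ is executed with register $\mathrm{in}{:}j$ initialised to $b_j$ ($j\le n$) and all registers $\mathrm{aux}{:}i$ and $\mathrm{out}$ initialised to $F$, execution terminates (does not deadlock) without ever executing a basic instruction with focus $\mathrm{in}{:}j$ for $j>n$, and at termination register $\mathrm{out}$ contains $f(b_1,\dots,b_n)$. *)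

theory Defs
  imports Main
begin

text \<open>Variables v_1, v_2, ... are represented by Var 1, Var 2, ...;
 the Boolean values T, F are True, False.\<close>

datatype bform = Var nat | Neg bform | Disj bform bform | Conj bform bform

fun fsize :: "bform \<Rightarrow> nat" where
  "fsize (Var i) = 1"
| "fsize (Neg p) = fsize p + 1"
| "fsize (Disj p q) = fsize p + fsize q + 1"
| "fsize (Conj p q) = fsize p + fsize q + 1"

fun fvars :: "bform \<Rightarrow> nat set" where
  "fvars (Var i) = {i}"
| "fvars (Neg p) = fvars p"
| "fvars (Disj p q) = fvars p \<union> fvars q"
| "fvars (Conj p q) = fvars p \<union> fvars q"

fun feval :: "(nat \<Rightarrow> bool) \<Rightarrow> bform \<Rightarrow> bool" where
  "feval v (Var i) = v i"
| "feval v (Neg p) = (\<not> feval v p)"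
| "feval v (Disj p q) = (feval v p \<or> feval v q)"
| "feval v (Conj p q) = (feval v p \<and> feval v q)"

text \<open>The n-ary Boolean function induced by a formula; an argument tuple
 (b_1,...,b_n) is a list bs of length n, with b_j = bs ! (j - 1).\<close>
definition induced :: "nat \<Rightarrow> bform \<Rightarrow> bool list \<Rightarrow> bool" where
  "induced n p bs = feval (\<lambda>j. bs ! (j - 1)) p"

datatype focus = In nat | Aux nat | Out
datatype meth = SetM bool | Get

type_synonym basic = "focus \<times> meth"

datatype prim = Plain basic | PosT basic | NegT basic | Jump nat | Term

type_synonym iseq = "prim list"

fun basic_of :: "prim \<Rightarrow> basic set" where
  "basic_of (Plain a) = {a}"
| "basic_of (PosT a) = {a}"
| "basic_of (NegT a) = {a}"
| "basic_of (Jump l) = {}"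
| "basic_of Term = {}"

definition basics :: "iseq \<Rightarrow> basic set" where
  "basics X = (\<Union>u\<in>set X. basic_of u)"

fun effect :: "basic \<Rightarrow> (focus \<Rightarrow> bool) \<Rightarrow> bool \<times> (focus \<Rightarrow> bool)" where
  "effect (f, SetM b) s = (b, s(f := b))"
| "effect (f, Get) s = (s f, s)"

text \<open>Execution from position i (1-based). Result None = deadlock;
 Some (s, tr) = termination with final register state s, where tr lists the
 basic instructions executed (in order).\<close>
function exec :: "iseq \<Rightarrow> nat \<Rightarrow> (focus \<Rightarrow> bool) \<Rightarrow> ((focus \<Rightarrow> bool) \<times> basic list) option" where
  "exec X i s =
    (if i = 0 \<or> length X < i then None
     else (case X ! (i - 1) of
        Term \<Rightarrow> Some (s, [])
      | Jump l \<Rightarrow> (if l = 0 then None else exec X (i + l) s)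
      | Plain a \<Rightarrow> (case effect a s of (r, s') \<Rightarrow>
            map_option (\<lambda>(t, tr). (t, a # tr)) (exec X (i + 1) s'))
      | PosT a \<Rightarrow> (case effect a s of (r, s') \<Rightarrow>
            map_option (\<lambda>(t, tr). (t, a # tr)) (exec X (if r then i + 1 else i + 2) s'))
      | NegT a \<Rightarrow> (case effect a s of (r, s') \<Rightarrow>
            map_option (\<lambda>(t, tr). (t, a # tr)) (exec X (if r then i + 2 else i + 1) s'))))"
  by pat_completeness auto
termination
  by (relation "measure (\<lambda>(X, i, s). Suc (length X) - i)") auto

definition IS_br :: "iseq set" where
  "IS_br = {X. X \<noteq> [] \<and> basics X \<subseteq>
     {(f, Get) | f i. i \<ge> 1 \<and> (f = In i \<or> f = Aux i)} \<union>
     {(f, SetM b) | f b. f = Out \<or> (\<exists>i\<ge>1. f = Aux i)}}"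

definition IS_na :: "iseq set" where
  "IS_na = {X. X \<in> IS_br \<and> basics X \<subseteq>
     {(In i, Get) | i. i \<ge> 1} \<union> {(Out, SetM True), (Out, SetM False)}}"

text \<open>Initial register state for inputs bs = (b_1,...,b_n): in:j holds b_j for
 1 <= j <= n; aux:i and out hold F. (Registers in:j with j > n are never
 accessed by a computing sequence; their value is set to F.)\<close>
definition init_state :: "bool list \<Rightarrow> focus \<Rightarrow> bool" where
  "init_state bs f = (case f of In j \<Rightarrow> (1 \<le> j \<and> j \<le> length bs \<and> bs ! (j - 1))
                              | Aux i \<Rightarrow> False | Out \<Rightarrow> False)"

definition computes :: "iseq \<Rightarrow> nat \<Rightarrow> (bool list \<Rightarrow> bool) \<Rightarrow> bool" where
  "computes X n F \<longleftrightarrow> X \<in> IS_br \<and>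
    (\<forall>bs. length bs = n \<longrightarrow>
      (\<exists>s tr. exec X 1 (init_state bs) = Some (s, tr) \<and>
         (\<forall>j m. (In j, m) \<in> set tr \<longrightarrow> j \<le> n) \<and>
         s Out = F bs))"

end

theory Submission
  imports Defs
begin

(* Every basic Boolean formula p is compiled into a fragment
   compile_test p of at most 2 * fsize p instructions that behaves like a
   single positive test instruction: started at its first instruction, it only
   reads input registers of variables of p, leaves the registers unchanged,
   and continues right behind the fragment if p is true and one instruction
   further if p is false.  Variables become tests +in:i.get; negation,
   conjunction and disjunction are obtained by placing two jumps behind the
   code of the first operand that reroute its two exits (short-circuit
   evaluation).  Appending  out.set:T ; !  yields a program that sets out to T
   exactly when p holds, so it uses only input reads and out.set:T, computes
   the induced function, and has length at most 2 * (fsize p + 1).  Hence the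
   theorem holds with c = 2. *)

(* Execution is unfolded one step at a time by the lemmas below. *)
declare exec.simps[simp del]

(* The test fragment of a formula; exits at offset +1 (true) or +2 (false)
   behind its last instruction. *)
fun compile_test :: "bform \<Rightarrow> iseq" where
  "compile_test (Var i) = [PosT (In i, Get)]"
| "compile_test (Neg p) = compile_test p @ [Jump 3, Jump 1]"
| "compile_test (Conj p q) =
     compile_test p @ [Jump 2, Jump (length (compile_test q) + 2)] @ compile_test q"
| "compile_test (Disj p q) =
     compile_test p @ [Jump (length (compile_test q) + 2), Jump 1] @ compile_test q"

definition input_reads :: "bform \<Rightarrow> basic set" where
  "input_reads p = {(In i, Get) | i. i \<in> fvars p}"

lemma length_compile_test: "length (compile_test p) \<le> 2 * fsize p"
  by (induction p) auto

lemma basics_compile_test: "basics (compile_test p) \<subseteq> input_reads p"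
  by (induction p) (auto simp: basics_def input_reads_def)

definition prefix_trace ::
  "basic list \<Rightarrow> ((focus \<Rightarrow> bool) \<times> basic list) option \<Rightarrow> ((focus \<Rightarrow> bool) \<times> basic list) option"
  where "prefix_trace tr r = map_option (\<lambda>(t, tr'). (t, tr @ tr')) r"

lemma prefix_trace_append: "prefix_trace tr (prefix_trace tr' r) = prefix_trace (tr @ tr') r"
  by (cases r) (auto simp: prefix_trace_def)

lemma exec_jump:
  "\<lbrakk>0 < i; i \<le> length X; X ! (i - 1) = Jump l; 0 < l\<rbrakk> \<Longrightarrow> exec X i s = exec X (i + l) s"
  by (subst exec.simps) auto

lemma exec_test_get:
  "\<lbrakk>0 < i; i \<le> length X; X ! (i - 1) = PosT (f, Get)\<rbrakk> \<Longrightarrow>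
   exec X i s = prefix_trace [(f, Get)] (exec X (if s f then i + 1 else i + 2) s)"
  by (subst exec.simps) (auto simp: prefix_trace_def)

lemma compile_test_exec:
  assumes "X = pre @ compile_test p @ post"
  shows "\<exists>tr. set tr \<subseteq> input_reads p \<and>
     exec X (length pre + 1) s =
       prefix_trace tr (exec X (length pre + length (compile_test p)
                                + (if feval (\<lambda>j. s (In j)) p then 1 else 2)) s)"
  using assms
proof (induction p arbitrary: pre post)
  case (Var i)
  have "exec X (length pre + 1) s =
        prefix_trace [(In i, Get)] (exec X (length pre + (if s (In i) then 2 else 3)) s)"
    by (subst exec_test_get) (auto simp: Var nth_append eval_nat_numeral)
  then show ?case
    by (intro exI[of _ "[(In i, Get)]"]) (auto simp: input_reads_def eval_nat_numeral)
next
  case (Neg p)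
  let ?e = "length pre + length (compile_test p)"
  have X: "X = pre @ compile_test p @ [Jump 3, Jump 1] @ post" using Neg.prems by simp
  obtain tr where reads: "set tr \<subseteq> input_reads p" and run_p:
    "exec X (length pre + 1) s = prefix_trace tr (exec X (?e + (if feval (\<lambda>j. s (In j)) p then 1 else 2)) s)"
    using Neg.IH[OF X] by blast
  have "exec X (?e + 1) s = exec X (?e + 4) s"
    by (rule trans[OF exec_jump]) (auto simp: X nth_append eval_nat_numeral)
  moreover have "exec X (?e + 2) s = exec X (?e + 3) s"
    by (rule trans[OF exec_jump]) (auto simp: X nth_append eval_nat_numeral)
  ultimately show ?case using reads run_p by (auto simp: input_reads_def eval_nat_numeral)
next
  case (Conj p q)
  let ?e = "length pre + length (compile_test p)"
  let ?v = "feval (\<lambda>j. s (In j))"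
  have X: "X = pre @ compile_test p @ [Jump 2, Jump (length (compile_test q) + 2)] @ compile_test q @ post"
    using Conj.prems by simp
  obtain tr where reads: "set tr \<subseteq> input_reads p" and run_p:
    "exec X (length pre + 1) s = prefix_trace tr (exec X (?e + (if ?v p then 1 else 2)) s)"
    using Conj.IH(1)[OF X] by blast
  obtain tr' where reads': "set tr' \<subseteq> input_reads q" and run_q:
    "exec X (?e + 2 + 1) s =
     prefix_trace tr' (exec X (?e + 2 + length (compile_test q) + (if ?v q then 1 else 2)) s)"
    using Conj.IH(2)[of "pre @ compile_test p @ [Jump 2, Jump (length (compile_test q) + 2)]"] X
    by auto
  have true_p: "exec X (?e + 1) s = exec X (?e + 2 + 1) s"
    by (rule trans[OF exec_jump]) (auto simp: X nth_append eval_nat_numeral)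
  have false_p: "exec X (?e + 2) s = exec X (?e + 2 + length (compile_test q) + 2) s"
    by (rule trans[OF exec_jump]) (auto simp: X nth_append eval_nat_numeral)
  show ?case
  proof (cases "?v p")
    case True
    then show ?thesis using reads reads' run_p run_q true_p
      by (intro exI[of _ "tr @ tr'"]) (auto simp: prefix_trace_append input_reads_def add.assoc)
  next
    case False
    then show ?thesis using reads run_p false_p
      by (intro exI[of _ tr]) (auto simp: input_reads_def add.assoc)
  qed
next
  case (Disj p q)
  let ?e = "length pre + length (compile_test p)"
  let ?v = "feval (\<lambda>j. s (In j))"
  have X: "X = pre @ compile_test p @ [Jump (length (compile_test q) + 2), Jump 1] @ compile_test q @ post"
    using Disj.prems by simp
  obtain tr where reads: "set tr \<subseteq> input_reads p" and run_p:
    "exec X (length pre + 1) s = prefix_trace tr (exec X (?e + (if ?v p then 1 else 2)) s)"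
    using Disj.IH(1)[OF X] by blast
  obtain tr' where reads': "set tr' \<subseteq> input_reads q" and run_q:
    "exec X (?e + 2 + 1) s =
     prefix_trace tr' (exec X (?e + 2 + length (compile_test q) + (if ?v q then 1 else 2)) s)"
    using Disj.IH(2)[of "pre @ compile_test p @ [Jump (length (compile_test q) + 2), Jump 1]"] X
    by auto
  have true_p: "exec X (?e + 1) s = exec X (?e + 2 + length (compile_test q) + 1) s"
    by (rule trans[OF exec_jump]) (auto simp: X nth_append eval_nat_numeral)
  have false_p: "exec X (?e + 2) s = exec X (?e + 2 + 1) s"
    by (rule trans[OF exec_jump]) (auto simp: X nth_append eval_nat_numeral)
  show ?case
  proof (cases "?v p")
    case True
    then show ?thesis using reads run_p true_p
      by (intro exI[of _ tr]) (auto simp: input_reads_def add.assoc)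
  next
    case False
    then show ?thesis using reads reads' run_p run_q false_p
      by (intro exI[of _ "tr @ tr'"]) (auto simp: prefix_trace_append input_reads_def add.assoc)
  qed
qed

definition program :: "bform \<Rightarrow> iseq" where
  "program p = compile_test p @ [Plain (Out, SetM True), Term]"

lemma length_program: "length (program p) \<le> 2 * (fsize p + 1)"
  using length_compile_test[of p] by (simp add: program_def)

lemma basics_program: "basics (program p) \<subseteq> input_reads p \<union> {(Out, SetM True)}"
  using basics_compile_test[of p] by (auto simp: program_def basics_def)

lemma program_in_IS_na:
  assumes "0 \<notin> fvars p"
  shows "program p \<in> IS_na"
proof -
  have "input_reads p \<subseteq> {(In i, Get) | i. i \<ge> 1}"
    using assms unfolding input_reads_def by (auto simp: Suc_le_eq) (metis gr0I)
  then have "basics (program p) \<subseteq> {(In i, Get) | i. i \<ge> 1} \<union> {(Out, SetM True)}"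
    using basics_program[of p] by blast
  moreover have "program p \<noteq> []" by (simp add: program_def)
  ultimately show ?thesis unfolding IS_na_def IS_br_def by blast
qed

lemma exec_program:
  "\<exists>tr. set tr \<subseteq> input_reads p \<union> {(Out, SetM True)} \<and>
     exec (program p) 1 s = Some (s(Out := s Out \<or> feval (\<lambda>j. s (In j)) p), tr)"
proof -
  let ?k = "length (compile_test p)"
  obtain tr where reads: "set tr \<subseteq> input_reads p" and run:
    "exec (program p) 1 s =
     prefix_trace tr (exec (program p) (?k + (if feval (\<lambda>j. s (In j)) p then 1 else 2)) s)"
    using compile_test_exec[where X = "program p" and pre = "[]" and p = p
                              and post = "[Plain (Out, SetM True), Term]"]
    by (auto simp: program_def)
  have halt: "exec (program p) (?k + 2) t = Some (t, [])" for t
    by (subst exec.simps) (auto simp: program_def nth_append)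
  have set_out: "exec (program p) (?k + 1) s = Some (s(Out := True), [(Out, SetM True)])"
    using halt[of "s(Out := True)"] by (subst exec.simps) (auto simp: program_def nth_append)
  show ?thesis
  proof (cases "feval (\<lambda>j. s (In j)) p")
    case True
    then show ?thesis using reads run set_out
      by (intro exI[of _ "tr @ [(Out, SetM True)]"]) (auto simp: prefix_trace_def)
  next
    case False
    then show ?thesis using reads run halt[of s]
      by (intro exI[of _ tr]) (auto simp: prefix_trace_def)
  qed
qed

lemma feval_cong: "(\<And>j. j \<in> fvars p \<Longrightarrow> v j = w j) \<Longrightarrow> feval v p = feval w p"
  by (induction p) auto

lemma feval_init_state:
  assumes "fvars p \<subseteq> {1..n}" and "length bs = n"
  shows "feval (\<lambda>j. init_state bs (In j)) p = induced n p bs"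
  unfolding induced_def by (rule feval_cong) (use assms in \<open>auto simp: init_state_def\<close>)

lemma program_computes:
  assumes vars: "fvars p \<subseteq> {1..n}"
  shows "computes (program p) n (induced n p)"
  unfolding computes_def
proof (intro conjI allI impI)
  have "program p \<in> IS_na" using vars by (intro program_in_IS_na) auto
  then show "program p \<in> IS_br" by (simp add: IS_na_def)
next
  fix bs :: "bool list"
  assume len: "length bs = n"
  obtain tr where reads: "set tr \<subseteq> input_reads p \<union> {(Out, SetM True)}" and run:
    "exec (program p) 1 (init_state bs) =
     Some ((init_state bs)(Out := init_state bs Out \<or> induced n p bs), tr)"
    using exec_program[of p "init_state bs"] feval_init_state[OF vars len] by auto
  have "\<forall>j m. (In j, m) \<in> set tr \<longrightarrow> j \<le> n"
    using reads vars by (auto simp: input_reads_def)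
  then show "\<exists>s tr. exec (program p) 1 (init_state bs) = Some (s, tr) \<and>
               (\<forall>j m. (In j, m) \<in> set tr \<longrightarrow> j \<le> n) \<and> s Out = induced n p bs"
    using run by (auto simp: init_state_def)
qed

theorem theorem2:
  shows "\<exists>c::nat. \<forall>(p::bform) (n::nat). fvars p \<subseteq> {1..n} \<longrightarrow>
     (\<exists>X. X \<in> IS_na \<and> (Out, SetM False) \<notin> basics X \<and>
          computes X n (induced n p) \<and> length X \<le> c * (fsize p + 1))"
proof (intro exI[of _ 2] allI impI)
  fix p n
  assume vars: "fvars p \<subseteq> {1..n}"
  then have "program p \<in> IS_na" by (intro program_in_IS_na) auto
  moreover have "(Out, SetM False) \<notin> basics (program p)"
    using basics_program[of p] by (auto simp: input_reads_def)
  ultimately show "\<exists>X. X \<in> IS_na \<and> (Out, SetM False) \<notin> basics X \<and>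
          computes X n (induced n p) \<and> length X \<le> 2 * (fsize p + 1)"
    using program_computes[OF vars] length_program[of p] by blast
qed

end
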